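(* Let $k$ be a positive integer, $a\ge k+2$ an integer and $G=K_a\,\square\,K_a$. Then $\gamma_{P,k}(G/e)=a-k-1$ for every edge $e$ of $G$.
   Context: $K_a$ is the complete graph on $a$ vertices and $\square$ denotes the Cartesian product of graphs. For an edge $e=xy$, the contraction $G/e$ is obtained from $G-e$ by replacing $x$ and $y$ by a new vertex $v_{xy}$ adjacent to all vertices of $N_{G-e}(x)\cup N_{G-e}(y)$ (other than $x,y$). $N_G[v]$ is the closed neighbourhood of $v$, and $N_G[S]$ the union of closed neighbourhoods of vertices of $S$. For $S\subseteq V(G)$, define $\mathcal{P}^{0}_{G,k}(S)=N_G[S]$ and $\mathcal{P}^{i+1}_{G,k}(S)=\bigcup\{N_G[v] : v\in \mathcal{P}^{i}_{G,k}(S),\ |N_G[v]\setminus \mathcal{P}^{i}_{G,k}(S)|\le k\}$; these increase and stabilize to $\mathcal{P}^{\infty}_{G,k}(S)$. $S$ is a $k$-power dominating set if $\mathcal{P}^{\infty}_{G,k}(S)=V(G)$; $\gamma_{P,k}(G)$ is the minimum size of such a set. *)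

theory Defs
  imports Main
begin

text \<open>A (simple) graph is given by a vertex set V and a symmetric irreflexive
  adjacency relation E (only its restriction to V matters).\<close>

definition closed_nbhd :: "'a set \<Rightarrow> ('a \<Rightarrow> 'a \<Rightarrow> bool) \<Rightarrow> 'a \<Rightarrow> 'a set" where
  "closed_nbhd V E v = insert v {u \<in> V. E v u}"

definition closed_nbhd_set :: "'a set \<Rightarrow> ('a \<Rightarrow> 'a \<Rightarrow> bool) \<Rightarrow> 'a set \<Rightarrow> 'a set" where
  "closed_nbhd_set V E S = (\<Union>v\<in>S. closed_nbhd V E v)"

fun kpower_obs :: "'a set \<Rightarrow> ('a \<Rightarrow> 'a \<Rightarrow> bool) \<Rightarrow> nat \<Rightarrow> 'a set \<Rightarrow> nat \<Rightarrow> 'a set" where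
  "kpower_obs V E k S 0 = closed_nbhd_set V E S"
| "kpower_obs V E k S (Suc i) =
     \<Union>{closed_nbhd V E v | v. v \<in> kpower_obs V E k S i \<and>
          card (closed_nbhd V E v - kpower_obs V E k S i) \<le> k}"

definition kpower_obs_inf :: "'a set \<Rightarrow> ('a \<Rightarrow> 'a \<Rightarrow> bool) \<Rightarrow> nat \<Rightarrow> 'a set \<Rightarrow> 'a set" where
  "kpower_obs_inf V E k S = (\<Union>i. kpower_obs V E k S i)"

definition is_kpds :: "'a set \<Rightarrow> ('a \<Rightarrow> 'a \<Rightarrow> bool) \<Rightarrow> nat \<Rightarrow> 'a set \<Rightarrow> bool" where
  "is_kpds V E k S \<longleftrightarrow> S \<subseteq> V \<and> kpower_obs_inf V E k S = V"

definition kpower_dom_num :: "'a set \<Rightarrow> ('a \<Rightarrow> 'a \<Rightarrow> bool) \<Rightarrow> nat \<Rightarrow> nat" where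
  "kpower_dom_num V E k = (LEAST n. \<exists>S. finite S \<and> card S = n \<and> is_kpds V E k S)"

definition complete_V :: "nat \<Rightarrow> nat set" where
  "complete_V a = {..<a}"

definition complete_E :: "nat \<Rightarrow> nat \<Rightarrow> bool" where
  "complete_E u v \<longleftrightarrow> u \<noteq> v"

definition cart_V :: "'a set \<Rightarrow> 'b set \<Rightarrow> ('a \<times> 'b) set" where
  "cart_V V1 V2 = V1 \<times> V2"

definition cart_E :: "('a \<Rightarrow> 'a \<Rightarrow> bool) \<Rightarrow> ('b \<Rightarrow> 'b \<Rightarrow> bool) \<Rightarrow> 'a \<times> 'b \<Rightarrow> 'a \<times> 'b \<Rightarrow> bool" where
  "cart_E E1 E2 p q \<longleftrightarrow> (fst p = fst q \<and> E2 (snd p) (snd q)) \<or> (snd p = snd q \<and> E1 (fst p) (fst q))"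

text \<open>Contraction G/e of the edge e = xy: old vertices v \<notin> {x,y} become Some v,
  the new vertex v_xy is None.\<close>
definition contract_V :: "'a set \<Rightarrow> 'a \<Rightarrow> 'a \<Rightarrow> 'a option set" where
  "contract_V V x y = insert None (Some ` (V - {x, y}))"

definition contract_E :: "('a \<Rightarrow> 'a \<Rightarrow> bool) \<Rightarrow> 'a \<Rightarrow> 'a \<Rightarrow> 'a option \<Rightarrow> 'a option \<Rightarrow> bool" where
  "contract_E E x y p q = (case (p, q) of
      (Some u, Some v) \<Rightarrow> E u v
    | (None, Some v) \<Rightarrow> v \<notin> {x, y} \<and> (E x v \<or> E y v)
    | (Some u, None) \<Rightarrow> u \<notin> {x, y} \<and> (E u x \<or> E u y)
    | (None, None) \<Rightarrow> False)"

end

theory Submission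
  imports Defs
begin

text \<open>Let e join (i,j) and (i,j') (a column edge is mapped to a row edge by transposition). The new
  vertex is adjacent to every vertex of row i and of columns j and j', so for any S the closed
  neighbourhood N[S] consists of the vertices on the rows R and columns C met by S, with
  |R| \<le> |S| and |C| \<le> |S| + 1.

  If |S| \<le> a - k - 2, every vertex of N[S] either has all its neighbours in N[S] or has at least
  k + 1 neighbours outside it along some row or column (the new vertex supplying the last one in
  the tightest case), so no forcing step ever applies and the process stalls at N[S] \<noteq> V.

  Conversely, the new vertex together with a-k-2 vertices occupying distinct further rows and
  distinct further columns leaves only vertices of k columns undominated; every such vertex (r,c)
  is then forced by (r,j), whose unobserved neighbours are the k vertices of row r in those columns.\<close>

lemma closed_nbhd_iff: "u \<in> closed_nbhd V E v \<longleftrightarrow> u = v \<or> (u \<in> V \<and> E v u)"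
  by (auto simp: closed_nbhd_def)

lemma finite_closed_nbhd: "finite V \<Longrightarrow> finite (closed_nbhd V E v)"
  by (simp add: closed_nbhd_def)

lemma kpower_obs_subset: "S \<subseteq> V \<Longrightarrow> kpower_obs V E k S n \<subseteq> V"
  by (induction n) (auto simp: closed_nbhd_set_def closed_nbhd_def)

lemma kpower_obs_SucI:
  assumes "v \<in> kpower_obs V E k S n" "card (closed_nbhd V E v - kpower_obs V E k S n) \<le> k"
    and "u \<in> closed_nbhd V E v"
  shows "u \<in> kpower_obs V E k S (Suc n)"
  using assms by auto

lemma kpower_obs_Suc_eq:
  "kpower_obs V E k S (Suc n) = (\<Union>v \<in> {v \<in> kpower_obs V E k S n.
      card (closed_nbhd V E v - kpower_obs V E k S n) \<le> k}. closed_nbhd V E v)"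
  by auto

definition kpower_closed :: "'a set \<Rightarrow> ('a \<Rightarrow> 'a \<Rightarrow> bool) \<Rightarrow> nat \<Rightarrow> 'a set \<Rightarrow> bool" where
  "kpower_closed V E k B \<longleftrightarrow>
     (\<forall>v\<in>B. card (closed_nbhd V E v - B) \<le> k \<longrightarrow> closed_nbhd V E v \<subseteq> B)"

lemma kpower_obs_subset_closed:
  assumes "finite V" "kpower_closed V E k B" "closed_nbhd_set V E S \<subseteq> B"
  shows "kpower_obs V E k S n \<subseteq> B"
proof (induction n)
  case 0
  show ?case using assms(3) by simp
next
  case (Suc n)
  show ?case
  proof
    fix u assume "u \<in> kpower_obs V E k S (Suc n)"
    then obtain v where v: "v \<in> kpower_obs V E k S n" "u \<in> closed_nbhd V E v"
      and few: "card (closed_nbhd V E v - kpower_obs V E k S n) \<le> k" by auto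
    have "card (closed_nbhd V E v - B) \<le> card (closed_nbhd V E v - kpower_obs V E k S n)"
      using Suc.IH finite_closed_nbhd[OF assms(1)] by (intro card_mono) auto
    with few have "card (closed_nbhd V E v - B) \<le> k" by linarith
    with v Suc.IH assms(2) show "u \<in> B" by (auto simp: kpower_closed_def)
  qed
qed

lemma not_is_kpds_if_closed:
  assumes "finite V" "kpower_closed V E k B" "closed_nbhd_set V E S \<subseteq> B" "\<not> V \<subseteq> B"
  shows "\<not> is_kpds V E k S"
proof
  assume "is_kpds V E k S"
  then have "V \<subseteq> (\<Union>n. kpower_obs V E k S n)" by (simp add: is_kpds_def kpower_obs_inf_def)
  with kpower_obs_subset_closed[OF assms(1-3)] assms(4) show False by blast
qed

lemma closed_nbhd_iso:
  assumes "bij_betw g V V'" "\<And>u v. u \<in> V \<Longrightarrow> v \<in> V \<Longrightarrow> E' (g u) (g v) = E u v" "v \<in> V"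
  shows "closed_nbhd V' E' (g v) = g ` closed_nbhd V E v"
proof -
  have "{u \<in> V'. E' (g v) u} = g ` {u \<in> V. E v u}"
    using assms by (auto simp: bij_betw_def)
  then show ?thesis by (simp add: closed_nbhd_def)
qed

lemma kpower_obs_iso:
  assumes g: "bij_betw g V V'" and E: "\<And>u v. u \<in> V \<Longrightarrow> v \<in> V \<Longrightarrow> E' (g u) (g v) = E u v"
    and S: "S \<subseteq> V"
  shows "kpower_obs V' E' k (g ` S) n = g ` kpower_obs V E k S n"
proof (induction n)
  case 0
  have "(\<Union>v\<in>S. closed_nbhd V' E' (g v)) = (\<Union>v\<in>S. g ` closed_nbhd V E v)"
    using S closed_nbhd_iso[where E=E and E'=E', OF g E] by (intro SUP_cong) auto
  then show ?case by (simp add: closed_nbhd_set_def image_UN image_image)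
next
  case (Suc n)
  let ?P = "kpower_obs V E k S n"
  have P: "?P \<subseteq> V" using kpower_obs_subset[OF S] .
  have inj: "inj_on g V" using g by (simp add: bij_betw_def)
  have N: "closed_nbhd V' E' (g v) = g ` closed_nbhd V E v" if "v \<in> ?P" for v
    using closed_nbhd_iso[where E=E and E'=E', OF g E] that P by blast
  have N_sub: "closed_nbhd V E v \<subseteq> V" if "v \<in> ?P" for v
    using that P by (auto simp: closed_nbhd_def)
  have card_eq: "card (closed_nbhd V' E' (g v) - g ` ?P) = card (closed_nbhd V E v - ?P)"
    if "v \<in> ?P" for v
  proof -
    have "closed_nbhd V' E' (g v) - g ` ?P = g ` (closed_nbhd V E v - ?P)"
      using N[OF that] inj_on_image_set_diff[OF inj _ P] N_sub[OF that] by blast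
    moreover have "inj_on g (closed_nbhd V E v - ?P)"
      using inj N_sub[OF that] by (auto intro: inj_on_subset)
    ultimately show ?thesis by (simp add: card_image)
  qed
  have idx: "{w \<in> g ` ?P. card (closed_nbhd V' E' w - g ` ?P) \<le> k}
      = g ` {v \<in> ?P. card (closed_nbhd V E v - ?P) \<le> k}"
    using card_eq by auto
  have "kpower_obs V' E' k (g ` S) (Suc n)
      = (\<Union>v \<in> {v \<in> ?P. card (closed_nbhd V E v - ?P) \<le> k}. closed_nbhd V' E' (g v))"
    unfolding kpower_obs_Suc_eq Suc.IH idx image_image by (rule refl)
  also have "\<dots> = g ` kpower_obs V E k S (Suc n)"
    unfolding kpower_obs_Suc_eq image_UN by (rule SUP_cong) (auto simp: N)
  finally show ?case .
qed

lemma is_kpds_iso: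
  assumes g: "bij_betw g V V'" and E: "\<And>u v. u \<in> V \<Longrightarrow> v \<in> V \<Longrightarrow> E' (g u) (g v) = E u v"
    and S: "is_kpds V E k S"
  shows "is_kpds V' E' k (g ` S)"
proof -
  have "S \<subseteq> V" using S by (simp add: is_kpds_def)
  then have "kpower_obs_inf V' E' k (g ` S) = g ` kpower_obs_inf V E k S"
    using kpower_obs_iso[where E=E and E'=E', OF g E] by (auto simp: kpower_obs_inf_def)
  also have "\<dots> = V'" using S g by (simp add: is_kpds_def bij_betw_def)
  finally show ?thesis
    using \<open>S \<subseteq> V\<close> g by (auto simp: is_kpds_def bij_betw_def)
qed

lemma ex_kpds_card_iso:
  assumes g: "bij_betw g V V'" and E: "\<And>u v. u \<in> V \<Longrightarrow> v \<in> V \<Longrightarrow> E' (g u) (g v) = E u v"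
    and "\<exists>S. finite S \<and> card S = n \<and> is_kpds V E k S"
  shows "\<exists>S. finite S \<and> card S = n \<and> is_kpds V' E' k S"
proof -
  obtain S where S: "finite S" "card S = n" "is_kpds V E k S" using assms(3) by blast
  have "inj_on g S"
    using g S(3) inj_on_subset by (auto simp: bij_betw_def is_kpds_def)
  then have "card (g ` S) = n" using S(2) by (simp add: card_image)
  with S(1) is_kpds_iso[where E=E and E'=E', OF g E S(3)] show ?thesis by blast
qed

lemma kpower_dom_num_iso:
  assumes g: "bij_betw g V V'" and E: "\<And>u v. u \<in> V \<Longrightarrow> v \<in> V \<Longrightarrow> E' (g u) (g v) = E u v"
  shows "kpower_dom_num V' E' k = kpower_dom_num V E k"
proof -
  let ?h = "inv_into V g"
  have h: "bij_betw ?h V' V" using g by (rule bij_betw_inv_into)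
  have E': "E (?h u) (?h v) = E' u v" if "u \<in> V'" "v \<in> V'" for u v
  proof -
    have "?h u \<in> V" "?h v \<in> V" using h that by (simp_all add: bij_betw_apply)
    moreover have "g (?h u) = u" "g (?h v) = v"
      using g that by (simp_all add: bij_betw_imp_surj_on f_inv_into_f)
    ultimately show ?thesis using E by metis
  qed
  have "(\<exists>S. finite S \<and> card S = n \<and> is_kpds V' E' k S)
      \<longleftrightarrow> (\<exists>S. finite S \<and> card S = n \<and> is_kpds V E k S)" for n
  proof
    show "\<exists>S. finite S \<and> card S = n \<and> is_kpds V E k S"
      if "\<exists>S. finite S \<and> card S = n \<and> is_kpds V' E' k S"
      using ex_kpds_card_iso[where E=E' and E'=E, OF h E' that] .
    show "\<exists>S. finite S \<and> card S = n \<and> is_kpds V' E' k S"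
      if "\<exists>S. finite S \<and> card S = n \<and> is_kpds V E k S"
      using ex_kpds_card_iso[where E=E and E'=E', OF g E that] .
  qed
  then show ?thesis by (simp add: kpower_dom_num_def)
qed

lemma contract_V_iso:
  assumes "inj h"
  shows "map_option h ` contract_V V x y = contract_V (h ` V) (h x) (h y)"
proof -
  have "h ` (V - {x, y}) = h ` V - {h x, h y}" using assms by (simp add: image_set_diff)
  moreover have "map_option h ` Some ` A = Some ` h ` A" for A by (simp add: image_image)
  ultimately show ?thesis by (simp add: contract_V_def)
qed

lemma contract_E_iso:
  assumes "inj h" "\<And>u v. E' (h u) (h v) = E u v"
  shows "contract_E E' (h x) (h y) (map_option h p) (map_option h q) = contract_E E x y p q"
  by (cases p; cases q) (simp_all add: contract_E_def assms inj_eq)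

lemma cart_E_swap: "cart_E E E (prod.swap u) (prod.swap v) = cart_E E E u v"
  by (auto simp: cart_E_def)

lemma kpower_dom_num_contract_swap:
  "kpower_dom_num (contract_V (cart_V A A) (prod.swap x) (prod.swap y))
      (contract_E (cart_E E E) (prod.swap x) (prod.swap y)) k
    = kpower_dom_num (contract_V (cart_V A A) x y) (contract_E (cart_E E E) x y) k"
proof (rule kpower_dom_num_iso)
  have inj: "inj (map_option prod.swap :: ('a \<times> 'a) option \<Rightarrow> ('a \<times> 'a) option)"
    by (simp add: option.inj_map)
  have "map_option prod.swap ` contract_V (cart_V A A) x y
      = contract_V (cart_V A A) (prod.swap x) (prod.swap y)"
    using contract_V_iso[OF inj_swap, of "cart_V A A" x y] by (simp add: cart_V_def product_swap)
  with inj show "bij_betw (map_option prod.swap) (contract_V (cart_V A A) x y)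
      (contract_V (cart_V A A) (prod.swap x) (prod.swap y))"
    by (simp add: bij_betw_def inj_on_subset[OF inj])
  show "contract_E (cart_E E E) (prod.swap x) (prod.swap y) (map_option prod.swap u) (map_option prod.swap v)
      = contract_E (cart_E E E) x y u v" for u v
    by (rule contract_E_iso[OF inj_swap, where E="cart_E E E" and E'="cart_E E E", OF cart_E_swap])
qed

lemma le_card_if_inj_lessThan_diff:
  assumes "finite X" "finite B" "inj_on f ({..<a} - B)" "f ` ({..<a} - B) \<subseteq> X"
    and "card B + n \<le> (a::nat)"
  shows "n \<le> card X"
proof -
  have "a - card B \<le> card ({..<a} - B)"
    using diff_card_le_card_Diff[OF assms(2), of "{..<a}"] by simp
  also have "\<dots> \<le> card X" using card_inj_on_le[OF assms(3,4,1)] .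
  finally show ?thesis using assms(5) by linarith
qed

lemma ex_less_notin:
  assumes "finite B" "card B < (a::nat)"
  shows "\<exists>r<a. r \<notin> B"
proof (rule ccontr)
  assume "\<not> (\<exists>r<a. r \<notin> B)"
  then have "{..<a} \<subseteq> B" by auto
  from card_mono[OF assms(1) this] assms(2) show False by simp
qed

lemma card_Some_vimage:
  assumes "finite S"
  shows "card (Some -` S) + (if None \<in> S then 1 else 0) = card S"
proof -
  have "card (Some -` S) = card (S - {None})"
  proof -
    have "S - {None} \<subseteq> range Some"
    proof
      fix u assume "u \<in> S - {None}"
      then show "u \<in> range Some" by (cases u) auto
    qed
    then show ?thesis using card_vimage_inj[of Some "S - {None}"] by (simp add: vimage_def)
  qed
  moreover have "None \<in> S \<Longrightarrow> 0 < card S" using assms card_gt_0_iff by blast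
  ultimately show ?thesis using assms by (auto simp: card_Diff_singleton_if)
qed

lemma cart_E_complete_E [simp]:
  "cart_E complete_E complete_E (r, c) (r', c') \<longleftrightarrow> (r = r' \<and> c \<noteq> c') \<or> (c = c' \<and> r \<noteq> r')"
  by (auto simp: cart_E_def complete_E_def)

lemma mem_cart_V_complete_V [simp]:
  "(r, c) \<in> cart_V (complete_V a) (complete_V a) \<longleftrightarrow> r < a \<and> c < a"
  by (simp add: cart_V_def complete_V_def)

locale contracted_rook =
  fixes a i j j' :: nat
  assumes i_less: "i < a" and j_less: "j < a" and j'_less: "j' < a" and j_neq_j': "j \<noteq> j'"
begin

abbreviation V_e :: "(nat \<times> nat) option set" where
  "V_e \<equiv> contract_V (cart_V (complete_V a) (complete_V a)) (i, j) (i, j')"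

abbreviation E_e :: "(nat \<times> nat) option \<Rightarrow> (nat \<times> nat) option \<Rightarrow> bool" where
  "E_e \<equiv> contract_E (cart_E complete_E complete_E) (i, j) (i, j')"

lemma finite_V_e: "finite V_e"
  by (simp add: contract_V_def cart_V_def complete_V_def)

lemma None_in_V_e [simp]: "None \<in> V_e"
  by (simp add: contract_V_def)

lemma Some_in_V_e [simp]:
  "Some (r, c) \<in> V_e \<longleftrightarrow> r < a \<and> c < a \<and> (r, c) \<noteq> (i, j) \<and> (r, c) \<noteq> (i, j')"
  by (auto simp: contract_V_def)

lemma E_e_simps [simp]:
  "E_e (Some (r, c)) (Some (r', c')) \<longleftrightarrow> (r = r' \<and> c \<noteq> c') \<or> (c = c' \<and> r \<noteq> r')"
  "E_e None (Some (r, c)) \<longleftrightarrow> (r, c) \<noteq> (i, j) \<and> (r, c) \<noteq> (i, j') \<and> (r = i \<or> c = j \<or> c = j')"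
  "E_e (Some (r, c)) None \<longleftrightarrow> (r, c) \<noteq> (i, j) \<and> (r, c) \<noteq> (i, j') \<and> (r = i \<or> c = j \<or> c = j')"
  "\<not> E_e None None"
  by (auto simp: contract_E_def)

definition rows :: "(nat \<times> nat) option set \<Rightarrow> nat set" where
  "rows S = fst ` (Some -` S) \<union> (if None \<in> S then {i} else {})"

definition cols :: "(nat \<times> nat) option set \<Rightarrow> nat set" where
  "cols S = snd ` (Some -` S) \<union> (if None \<in> S then {j, j'} else {})"

definition covered :: "nat set \<Rightarrow> nat set \<Rightarrow> (nat \<times> nat) option set" where
  "covered R C = {u \<in> V_e. case u of None \<Rightarrow> i \<in> R \<or> j \<in> C \<or> j' \<in> C | Some (r, c) \<Rightarrow> r \<in> R \<or> c \<in> C}"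

lemma None_in_covered [simp]: "None \<in> covered R C \<longleftrightarrow> i \<in> R \<or> j \<in> C \<or> j' \<in> C"
  by (simp add: covered_def)

lemma Some_in_covered [simp]: "Some (r, c) \<in> covered R C \<longleftrightarrow> Some (r, c) \<in> V_e \<and> (r \<in> R \<or> c \<in> C)"
  by (simp add: covered_def del: Some_in_V_e)

lemma None_in_closed_nbhd_set:
  assumes "S \<subseteq> V_e"
  shows "None \<in> closed_nbhd_set V_e E_e S \<longleftrightarrow> i \<in> rows S \<or> j \<in> cols S \<or> j' \<in> cols S"
proof
  assume "None \<in> closed_nbhd_set V_e E_e S"
  then obtain v where "v \<in> S" "None \<in> closed_nbhd V_e E_e v" by (auto simp: closed_nbhd_set_def)
  then show "i \<in> rows S \<or> j \<in> cols S \<or> j' \<in> cols S"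
  proof (cases v)
    case (Some p)
    with \<open>v \<in> S\<close> have "fst p \<in> rows S" "snd p \<in> cols S" by (auto simp: rows_def cols_def)
    moreover have "fst p = i \<or> snd p = j \<or> snd p = j'"
      using \<open>None \<in> closed_nbhd V_e E_e v\<close> Some by (cases p) (auto simp: closed_nbhd_iff)
    ultimately show ?thesis by blast
  qed (auto simp: rows_def)
next
  assume "i \<in> rows S \<or> j \<in> cols S \<or> j' \<in> cols S"
  then consider "None \<in> S" | r c where "Some (r, c) \<in> S" "r = i \<or> c = j \<or> c = j'"
    by (auto simp: rows_def cols_def split: if_splits)
  then show "None \<in> closed_nbhd_set V_e E_e S"
  proof cases
    case 1
    then show ?thesis by (auto simp: closed_nbhd_set_def closed_nbhd_iff)
  next
    case 2
    then have "None \<in> closed_nbhd V_e E_e (Some (r, c))"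
      using assms j_neq_j' by (auto simp: closed_nbhd_iff)
    with 2 show ?thesis by (auto simp: closed_nbhd_set_def)
  qed
qed

lemma Some_in_closed_nbhd_set:
  assumes "S \<subseteq> V_e"
  shows "Some (r, c) \<in> closed_nbhd_set V_e E_e S \<longleftrightarrow> Some (r, c) \<in> V_e \<and> (r \<in> rows S \<or> c \<in> cols S)"
proof
  assume "Some (r, c) \<in> closed_nbhd_set V_e E_e S"
  then obtain v where v: "v \<in> S" "Some (r, c) \<in> closed_nbhd V_e E_e v"
    by (auto simp: closed_nbhd_set_def)
  then have "Some (r, c) \<in> V_e" using assms by (auto simp: closed_nbhd_iff)
  moreover have "r \<in> rows S \<or> c \<in> cols S"
  proof (cases v)
    case None
    with v show ?thesis by (auto simp: closed_nbhd_iff rows_def cols_def)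
  next
    case (Some p)
    with v have "fst p \<in> rows S" "snd p \<in> cols S" by (auto simp: rows_def cols_def)
    moreover have "r = fst p \<or> c = snd p"
      using v(2) Some by (cases p) (auto simp: closed_nbhd_iff)
    ultimately show ?thesis by blast
  qed
  ultimately show "Some (r, c) \<in> V_e \<and> (r \<in> rows S \<or> c \<in> cols S)" by blast
next
  assume rc: "Some (r, c) \<in> V_e \<and> (r \<in> rows S \<or> c \<in> cols S)"
  then consider "None \<in> S" "r = i \<or> c = j \<or> c = j'" | c0 where "Some (r, c0) \<in> S"
    | r0 where "Some (r0, c) \<in> S"
    by (auto simp: rows_def cols_def split: if_splits)
  then obtain v where "v \<in> S" "Some (r, c) \<in> closed_nbhd V_e E_e v"
  proof cases
    case 1
    with rc show ?thesis using that[of None] by (auto simp: closed_nbhd_iff)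
  next
    case (2 c0)
    with rc show ?thesis using that[of "Some (r, c0)"] by (cases "c = c0") (auto simp: closed_nbhd_iff)
  next
    case (3 r0)
    with rc show ?thesis using that[of "Some (r0, c)"] by (cases "r = r0") (auto simp: closed_nbhd_iff)
  qed
  then show "Some (r, c) \<in> closed_nbhd_set V_e E_e S" by (auto simp: closed_nbhd_set_def)
qed

lemma closed_nbhd_set_eq_covered:
  assumes "S \<subseteq> V_e"
  shows "closed_nbhd_set V_e E_e S = covered (rows S) (cols S)"
proof (rule set_eqI)
  fix u
  show "u \<in> closed_nbhd_set V_e E_e S \<longleftrightarrow> u \<in> covered (rows S) (cols S)"
  proof (cases u)
    case (Some p)
    then show ?thesis using Some_in_closed_nbhd_set[OF assms] by (cases p) simp
  qed (simp add: None_in_closed_nbhd_set[OF assms])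
qed

lemma finite_rows: "finite S \<Longrightarrow> finite (rows S)"
  by (simp add: rows_def finite_vimageI)

lemma finite_cols: "finite S \<Longrightarrow> finite (cols S)"
  by (simp add: cols_def finite_vimageI)

lemma card_rows_le:
  assumes "finite S"
  shows "card (rows S) \<le> card S"
proof -
  have "card (rows S) \<le> card (fst ` (Some -` S)) + (if None \<in> S then 1 else 0)"
    unfolding rows_def by (rule order_trans[OF card_Un_le]) simp
  also have "\<dots> \<le> card (Some -` S) + (if None \<in> S then 1 else 0)"
    using card_image_le[OF finite_vimageI[OF assms inj_Some]] by simp
  finally show ?thesis using card_Some_vimage[OF assms] by simp
qed

lemma card_cols_le:
  assumes "finite S"
  shows "card (cols S) \<le> card S + (if None \<in> S then 1 else 0)"
proof -
  have "card (cols S) \<le> card (snd ` (Some -` S)) + (if None \<in> S then 2 else 0)"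
    unfolding cols_def by (rule order_trans[OF card_Un_le]) (simp add: j_neq_j')
  also have "\<dots> \<le> card (Some -` S) + (if None \<in> S then 2 else 0)"
    using card_image_le[OF finite_vimageI[OF assms inj_Some]] by simp
  finally show ?thesis using card_Some_vimage[OF assms] by (simp split: if_splits)
qed

lemma covered_closed_at_None:
  assumes "finite R" "finite C" "card R + k + 2 \<le> a" "card C + k + 1 \<le> a"
  shows "closed_nbhd V_e E_e None \<subseteq> covered R C
    \<or> k + 1 \<le> card (closed_nbhd V_e E_e None - covered R C)"
proof -
  let ?X = "closed_nbhd V_e E_e None - covered R C"
  have X: "finite ?X" using finite_closed_nbhd[OF finite_V_e] by blast
  have R: "finite (insert i R)" "card (insert i R) + (k + 1) \<le> a"
    using assms(1,3) by (auto simp: card_insert_if)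
  consider "j \<notin> C" | "j' \<notin> C" | "i \<notin> R" "j \<in> C" "j' \<in> C" | "i \<in> R" "j \<in> C" "j' \<in> C"
    by blast
  then show ?thesis
  proof cases
    case 1
    then have "(\<lambda>r. Some (r, j)) ` ({..<a} - insert i R) \<subseteq> ?X"
      using j_less by (auto simp: closed_nbhd_iff)
    from le_card_if_inj_lessThan_diff[OF X R(1) _ this R(2)] show ?thesis by (simp add: inj_on_def)
  next
    case 2
    then have "(\<lambda>r. Some (r, j')) ` ({..<a} - insert i R) \<subseteq> ?X"
      using j'_less by (auto simp: closed_nbhd_iff)
    from le_card_if_inj_lessThan_diff[OF X R(1) _ this R(2)] show ?thesis by (simp add: inj_on_def)
  next
    case 3
    then have "(\<lambda>c. Some (i, c)) ` ({..<a} - C) \<subseteq> ?X"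
      using i_less by (auto simp: closed_nbhd_iff)
    from le_card_if_inj_lessThan_diff[OF X assms(2) _ this] assms(4) show ?thesis
      by (simp add: inj_on_def)
  next
    case 4
    have "u \<in> covered R C" if "u \<in> closed_nbhd V_e E_e None" for u
      using that 4 by (cases u) (auto simp: closed_nbhd_iff)
    then show ?thesis by blast
  qed
qed

lemma covered_closed_at_Some:
  assumes "finite R" "finite C" "card R + k + 2 \<le> a" "card C + k + 1 \<le> a"
    and "i \<notin> R \<Longrightarrow> card C + k + 2 \<le> a"
    and rc: "Some (r, c) \<in> covered R C"
  shows "closed_nbhd V_e E_e (Some (r, c)) \<subseteq> covered R C
    \<or> k + 1 \<le> card (closed_nbhd V_e E_e (Some (r, c)) - covered R C)"
proof -
  let ?X = "closed_nbhd V_e E_e (Some (r, c)) - covered R C"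
  have X: "finite ?X" using finite_closed_nbhd[OF finite_V_e] by blast
  have R: "finite (insert i R)" "card (insert i R) + (k + 1) \<le> a"
    using assms(1,3) by (auto simp: card_insert_if)
  have C: "finite (insert j (insert j' C))" using assms(2) by simp
  have r: "r < a" and c: "c < a" using rc by auto
  consider "r \<in> R" "c \<in> C" | "r \<in> R" "c \<notin> C" | "r \<notin> R" "r \<noteq> i"
    | "r \<notin> R" "r = i" "j \<in> C \<or> j' \<in> C" | "r \<notin> R" "r = i" "j \<notin> C" "j' \<notin> C"
    by blast
  then show ?thesis
  proof cases
    case 1
    have "u \<in> covered R C" if "u \<in> closed_nbhd V_e E_e (Some (r, c))" for u
      using that 1 rc by (cases u) (auto simp: closed_nbhd_iff)
    then show ?thesis by blast
  next
    case 2
    then have "(\<lambda>r'. Some (r', c)) ` ({..<a} - insert i R) \<subseteq> ?X"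
      using c by (auto simp: closed_nbhd_iff)
    from le_card_if_inj_lessThan_diff[OF X R(1) _ this R(2)] show ?thesis by (simp add: inj_on_def)
  next
    case 3
    with rc have "c \<in> C" by simp
    with 3 have "(\<lambda>c'. Some (r, c')) ` ({..<a} - C) \<subseteq> ?X"
      using r by (auto simp: closed_nbhd_iff)
    from le_card_if_inj_lessThan_diff[OF X assms(2) _ this] assms(4) show ?thesis
      by (simp add: inj_on_def)
  next
    case 4
    with rc have "c \<in> C" by simp
    with 4 have sub: "(\<lambda>c'. Some (i, c')) ` ({..<a} - insert j (insert j' C)) \<subseteq> ?X"
      using i_less by (auto simp: closed_nbhd_iff)
    have "card (insert j (insert j' C)) \<le> card C + 1"
      using 4(3) assms(2) by (cases "j \<in> C") (simp_all add: card_insert_if)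
    moreover have "card C + k + 2 \<le> a" using assms(5) 4(1,2) by blast
    ultimately have "card (insert j (insert j' C)) + (k + 1) \<le> a" by linarith
    from le_card_if_inj_lessThan_diff[OF X C _ sub this] show ?thesis by (simp add: inj_on_def)
  next
    case 5
    \<comment> \<open>only k unobserved vertices in the row, but the new vertex is unobserved as well\<close>
    with rc have "c \<in> C" by simp
    with 5 have sub: "(\<lambda>c'. Some (i, c')) ` ({..<a} - insert j (insert j' C)) \<subseteq> ?X - {None}"
      using i_less by (auto simp: closed_nbhd_iff)
    have "card (insert j (insert j' C)) \<le> card C + 2"
      using assms(2) by (simp add: card_insert_if)
    moreover have "card C + k + 2 \<le> a" using assms(5) 5(1,2) by blast
    ultimately have "card (insert j (insert j' C)) + k \<le> a" by linarith
    from le_card_if_inj_lessThan_diff[OF _ C _ sub this] X have "k \<le> card (?X - {None})"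
      by (simp add: inj_on_def)
    moreover have "None \<in> ?X" using 5 \<open>c \<in> C\<close> by (auto simp: closed_nbhd_iff)
    ultimately have "k + 1 \<le> card ?X" using card.remove[OF X] by fastforce
    then show ?thesis ..
  qed
qed

lemma covered_kpower_closed:
  assumes "finite R" "finite C" "card R + k + 2 \<le> a" "card C + k + 1 \<le> a"
    and "i \<notin> R \<Longrightarrow> card C + k + 2 \<le> a"
  shows "kpower_closed V_e E_e k (covered R C)"
  unfolding kpower_closed_def
proof (intro ballI impI)
  fix v assume v: "v \<in> covered R C" and few: "card (closed_nbhd V_e E_e v - covered R C) \<le> k"
  have "closed_nbhd V_e E_e v \<subseteq> covered R C \<or> k + 1 \<le> card (closed_nbhd V_e E_e v - covered R C)"
  proof (cases v)
    case None
    then show ?thesis using covered_closed_at_None[OF assms(1-4)] by simp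
  next
    case (Some p)
    then show ?thesis using covered_closed_at_Some[OF assms] v by (cases p) simp
  qed
  with few show "closed_nbhd V_e E_e v \<subseteq> covered R C" by linarith
qed

lemma not_is_kpds_if_card_le:
  assumes S: "S \<subseteq> V_e" "finite S" and small: "card S + k + 2 \<le> a"
  shows "\<not> is_kpds V_e E_e k S"
proof -
  have R: "finite (rows S)" "card (rows S) + k + 2 \<le> a"
    using finite_rows[OF S(2)] card_rows_le[OF S(2)] small by simp_all
  have cols_le: "card (cols S) \<le> card S + (if None \<in> S then 1 else 0)"
    using card_cols_le[OF S(2)] .
  have C: "finite (cols S)" "card (cols S) + k + 1 \<le> a"
    using finite_cols[OF S(2)] cols_le small by (simp_all split: if_splits)
  have C': "card (cols S) + k + 2 \<le> a" if "i \<notin> rows S"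
  proof -
    from that have "None \<notin> S" by (auto simp: rows_def split: if_splits)
    then show ?thesis using cols_le small by simp
  qed
  have closed: "kpower_closed V_e E_e k (covered (rows S) (cols S))"
    using covered_kpower_closed[OF R(1) C(1) R(2) C(2) C'] .
  have "card (insert i (rows S)) < a" using R by (simp add: card_insert_if)
  then obtain r where "r < a" "r \<notin> insert i (rows S)"
    using ex_less_notin[of "insert i (rows S)"] R(1) by auto
  moreover obtain c where "c < a" "c \<notin> cols S"
    using ex_less_notin[OF C(1), of a] C(2) by auto
  ultimately have "Some (r, c) \<in> V_e - covered (rows S) (cols S)" by simp
  then have "\<not> V_e \<subseteq> covered (rows S) (cols S)" by blast
  then show ?thesis
    using not_is_kpds_if_closed[OF finite_V_e closed] closed_nbhd_set_eq_covered[OF S(1)] by simp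
qed

lemma is_kpds_diagonal:
  assumes Rs: "Rs \<subseteq> {..<a} - {i}" and Cs: "Cs \<subseteq> {..<a} - {j, j'}" and g: "g ` Rs = Cs"
    and size: "card Cs + k + 2 = a"
  shows "is_kpds V_e E_e k (insert None ((\<lambda>r. Some (r, g r)) ` Rs))"
proof -
  let ?S = "insert None ((\<lambda>r. Some (r, g r)) ` Rs)"
  let ?P = "kpower_obs V_e E_e k ?S"
  let ?B = "insert j (insert j' Cs)"
  have "Some (r, g r) \<in> V_e" if "r \<in> Rs" for r
  proof -
    have "g r \<in> Cs" using g that by blast
    then show ?thesis using Rs Cs that by auto
  qed
  then have S: "?S \<subseteq> V_e" by auto
  have "Some -` ?S = (\<lambda>r. (r, g r)) ` Rs" by auto
  then have "rows ?S = insert i Rs" "cols ?S = ?B"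
    using g by (simp_all add: rows_def cols_def image_image)
  then have P0: "?P 0 = covered (insert i Rs) ?B"
    using closed_nbhd_set_eq_covered[OF S] by simp
  have B: "?B \<subseteq> {..<a}" using Cs j_less j'_less by auto
  have "card ?B = card Cs + 2"
    using Cs finite_subset[OF Cs] j_neq_j' by (auto simp: card_insert_if)
  then have card_free: "card ({..<a} - ?B) = k"
    using card_Diff_subset[OF finite_subset[OF B finite_lessThan] B] size by simp
  have "u \<in> ?P 0 \<union> ?P 1" if u: "u \<in> V_e" for u
  proof (cases "u \<in> ?P 0")
    case False
    then obtain r c where rc: "u = Some (r, c)" "r < a" "r \<notin> insert i Rs" "c \<notin> ?B"
      using u P0 by (cases u) auto
    let ?v = "Some (r, j)"
    have v: "?v \<in> ?P 0" using P0 rc j_less by simp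
    have sub: "closed_nbhd V_e E_e ?v - ?P 0 \<subseteq> (\<lambda>c'. Some (r, c')) ` ({..<a} - ?B)"
    proof
      fix w assume w: "w \<in> closed_nbhd V_e E_e ?v - ?P 0"
      then show "w \<in> (\<lambda>c'. Some (r, c')) ` ({..<a} - ?B)"
        using P0 rc j_less by (cases w) (auto simp: closed_nbhd_iff)
    qed
    have "card (closed_nbhd V_e E_e ?v - ?P 0) \<le> card ((\<lambda>c'. Some (r, c')) ` ({..<a} - ?B))"
      using sub by (intro card_mono) simp_all
    also have "\<dots> \<le> k" using card_image_le[of "{..<a} - ?B"] card_free by simp
    finally have "card (closed_nbhd V_e E_e ?v - ?P 0) \<le> k" .
    moreover have "u \<in> closed_nbhd V_e E_e ?v" using rc u by (auto simp: closed_nbhd_iff)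
    ultimately show ?thesis using kpower_obs_SucI[OF v] by (simp del: kpower_obs.simps)
  qed simp
  then have "V_e \<subseteq> kpower_obs_inf V_e E_e k ?S" unfolding kpower_obs_inf_def by blast
  moreover have "kpower_obs_inf V_e E_e k ?S \<subseteq> V_e"
    using kpower_obs_subset[OF S] by (auto simp: kpower_obs_inf_def)
  ultimately show ?thesis using S by (simp add: is_kpds_def)
qed

lemma ex_kpds_card:
  assumes "k + 2 \<le> a"
  shows "\<exists>S. finite S \<and> card S = a - k - 1 \<and> is_kpds V_e E_e k S"
proof -
  let ?m = "a - k - 2"
  have "?m \<le> card ({..<a} - {i})" using i_less by simp
  then obtain Rs where Rs: "Rs \<subseteq> {..<a} - {i}" "card Rs = ?m" "finite Rs"
    by (rule obtain_subset_with_card_n)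
  have "?m \<le> card ({..<a} - {j, j'})" using j_less j'_less j_neq_j' by (simp add: card_Diff_subset)
  then obtain Cs where Cs: "Cs \<subseteq> {..<a} - {j, j'}" "card Cs = ?m" "finite Cs"
    by (rule obtain_subset_with_card_n)
  obtain g where g: "bij_betw g Rs Cs"
    using finite_same_card_bij[OF Rs(3) Cs(3)] Rs(2) Cs(2) by auto
  let ?S = "insert None ((\<lambda>r. Some (r, g r)) ` Rs)"
  have "card ((\<lambda>r. Some (r, g r)) ` Rs) = ?m"
    using Rs(2) by (simp add: card_image inj_on_def)
  moreover have "None \<notin> (\<lambda>r. Some (r, g r)) ` Rs" by blast
  ultimately have "card ?S = a - k - 1"
    using card_insert_disjoint[OF finite_imageI[OF Rs(3)], of None "\<lambda>r. Some (r, g r)"] assms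
    by simp
  moreover have "is_kpds V_e E_e k ?S"
    using is_kpds_diagonal[OF Rs(1) Cs(1) bij_betw_imp_surj_on[OF g]] Cs(2) assms by simp
  moreover have "finite ?S" using Rs(3) by simp
  ultimately show ?thesis by blast
qed

theorem kpower_dom_num_eq:
  assumes "k + 2 \<le> a"
  shows "kpower_dom_num V_e E_e k = a - k - 1"
  unfolding kpower_dom_num_def
proof (rule Least_equality)
  show "\<exists>S. finite S \<and> card S = a - k - 1 \<and> is_kpds V_e E_e k S"
    using ex_kpds_card[OF assms] .
next
  fix n assume "\<exists>S. finite S \<and> card S = n \<and> is_kpds V_e E_e k S"
  then obtain S where S: "finite S" "card S = n" "is_kpds V_e E_e k S" by blast
  then have "S \<subseteq> V_e" by (simp add: is_kpds_def)
  show "a - k - 1 \<le> n"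
  proof (rule ccontr)
    assume "\<not> a - k - 1 \<le> n"
    then have "card S + k + 2 \<le> a" using S(2) by linarith
    with not_is_kpds_if_card_le[OF \<open>S \<subseteq> V_e\<close> S(1)] S(3) show False by blast
  qed
qed

end

theorem mainTheorem8:
  fixes k a :: nat and x y :: "nat \<times> nat"
  defines "V \<equiv> cart_V (complete_V a) (complete_V a)"
      and "E \<equiv> cart_E complete_E complete_E"
  assumes "k \<ge> 1" and "a \<ge> k + 2"
      and "x \<in> V" and "y \<in> V" and "E x y"
  shows "kpower_dom_num (contract_V V x y) (contract_E E x y) k = a - k - 1"
proof -
  obtain i j i' j' where xy: "x = (i, j)" "y = (i', j')" by fastforce
  have ij: "i < a" "j < a" "i' < a" "j' < a" using assms(5,6) by (simp_all add: V_def xy)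
  from assms(7) consider "i = i'" "j \<noteq> j'" | "j = j'" "i \<noteq> i'" by (auto simp: E_def xy)
  then show ?thesis
  proof cases
    case 1
    then interpret contracted_rook a i j j' using ij by unfold_locales auto
    show ?thesis using kpower_dom_num_eq assms(4) 1 by (simp add: V_def E_def xy)
  next
    case 2
    then interpret contracted_rook a j i i' using ij by unfold_locales auto
    have "kpower_dom_num (contract_V V x y) (contract_E E x y) k = kpower_dom_num V_e E_e k"
      using kpower_dom_num_contract_swap[of "complete_V a" x y complete_E k, symmetric] 2
      by (simp add: V_def E_def xy)
    then show ?thesis using kpower_dom_num_eq assms(4) by simp
  qed
qed

end
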